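(* Let $A$ be a commutative ring and $\sigma$ a hereditary torsion theory on $A$-modules. If $A$ is totally $\sigma$-artinian, then $\sigma$ is of finite type.
   Context: All rings are commutative with identity. $\mathcal{L}(\sigma)$ denotes the Gabriel filter of $\sigma$ (ideals $\mathfrak{h}$ with $A/\mathfrak{h}$ $\sigma$-torsion). $A$ is totally $\sigma$-artinian if for every descending chain of ideals $\mathfrak{a}_1\supseteq\mathfrak{a}_2\supseteq\cdots$ there exist an index $m$ and $\mathfrak{h}\in\mathcal{L}(\sigma)$ with $\mathfrak{a}_m\mathfrak{h}\subseteq\mathfrak{a}_s$ for all $s\ge m$. $\sigma$ is of finite type if $\mathcal{L}(\sigma)$ has a filter basis consisting of finitely generated ideals (every ideal in $\mathcal{L}(\sigma)$ contains a finitely generated ideal in $\mathcal{L}(\sigma)$). *)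

theory Defs
  imports "HOL-Algebra.Ideal_Product"
begin

definition colon_elem :: "('a, 'b) ring_scheme \<Rightarrow> 'a set \<Rightarrow> 'a \<Rightarrow> 'a set" where
  "colon_elem R J a = {x \<in> carrier R. x \<otimes>\<^bsub>R\<^esub> a \<in> J}"

text \<open>Hereditary torsion theories on R-modules correspond bijectively to Gabriel
  filters via sigma |-> L(sigma) = {h. R/h is sigma-torsion}.\<close>
definition gabriel_filter :: "('a, 'b) ring_scheme \<Rightarrow> 'a set set \<Rightarrow> bool" where
  "gabriel_filter R L \<longleftrightarrow>
     (\<forall>I\<in>L. ideal I R) \<and>
     carrier R \<in> L \<and>
     (\<forall>I\<in>L. \<forall>J. ideal J R \<and> I \<subseteq> J \<longrightarrow> J \<in> L) \<and>
     (\<forall>I\<in>L. \<forall>J\<in>L. I \<inter> J \<in> L) \<and>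
     (\<forall>I\<in>L. \<forall>a\<in>carrier R. colon_elem R I a \<in> L) \<and>
     (\<forall>J I. ideal J R \<and> I \<in> L \<and> (\<forall>a\<in>I. colon_elem R J a \<in> L) \<longrightarrow> J \<in> L)"

definition totally_artinian_wrt :: "('a, 'b) ring_scheme \<Rightarrow> 'a set set \<Rightarrow> bool" where
  "totally_artinian_wrt R L \<longleftrightarrow>
     (\<forall>\<aa> :: nat \<Rightarrow> 'a set. (\<forall>n. ideal (\<aa> n) R) \<and> (\<forall>n. \<aa> (Suc n) \<subseteq> \<aa> n) \<longrightarrow>
        (\<exists>m. \<exists>h\<in>L. \<forall>s\<ge>m. \<aa> m \<cdot>\<^bsub>R\<^esub> h \<subseteq> \<aa> s))"

definition finitely_generated_ideal :: "('a, 'b) ring_scheme \<Rightarrow> 'a set \<Rightarrow> bool" where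
  "finitely_generated_ideal R I \<longleftrightarrow> (\<exists>S. finite S \<and> S \<subseteq> carrier R \<and> I = Idl\<^bsub>R\<^esub> S)"

definition finite_type_filter :: "('a, 'b) ring_scheme \<Rightarrow> 'a set set \<Rightarrow> bool" where
  "finite_type_filter R L \<longleftrightarrow>
     (\<forall>I\<in>L. \<exists>J\<in>L. J \<subseteq> I \<and> finitely_generated_ideal R J)"

end

theory Submission
  imports Defs
begin

text \<open>Every ideal outside \<open>L\<close> lies in a prime ideal outside \<open>L\<close>: some colon ideal of its
  saturation is prime, since otherwise repeated splitting gives a chain \<open>C + (y\<^sub>n)\<close> contradicting the
  artinian condition. Prime ideals outside \<open>L\<close> are pairwise incomparable, and the artinian
  condition applied to their finite intersections shows there are only finitely many. Choosing,
  for \<open>I \<in> L\<close>, an element of \<open>I\<close> outside each of them yields a finitely generated ideal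
  \<open>J \<subseteq> I\<close> contained in no prime ideal outside \<open>L\<close>, hence \<open>J \<in> L\<close>.\<close>

text \<open>The \<open>\<sigma>\<close>-saturation of \<open>J\<close>: the preimage in \<open>A\<close> of the \<open>\<sigma>\<close>-torsion part of \<open>A/J\<close>.\<close>
definition saturation :: "('a, 'b) ring_scheme \<Rightarrow> 'a set set \<Rightarrow> 'a set \<Rightarrow> 'a set" where
  "saturation R L J = {x \<in> carrier R. colon_elem R J x \<in> L}"

lemma gabriel_filter_ideal: "gabriel_filter R L \<Longrightarrow> I \<in> L \<Longrightarrow> ideal I R"
  unfolding gabriel_filter_def by blast

lemma gabriel_filter_carrier: "gabriel_filter R L \<Longrightarrow> carrier R \<in> L"
  unfolding gabriel_filter_def by blast

lemma gabriel_filter_mono: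
  "gabriel_filter R L \<Longrightarrow> I \<in> L \<Longrightarrow> ideal J R \<Longrightarrow> I \<subseteq> J \<Longrightarrow> J \<in> L"
  unfolding gabriel_filter_def by blast

lemma gabriel_filter_Int: "gabriel_filter R L \<Longrightarrow> I \<in> L \<Longrightarrow> J \<in> L \<Longrightarrow> I \<inter> J \<in> L"
  unfolding gabriel_filter_def by blast

lemma gabriel_filter_colon_closed:
  "gabriel_filter R L \<Longrightarrow> ideal J R \<Longrightarrow> I \<in> L \<Longrightarrow> (\<And>a. a \<in> I \<Longrightarrow> colon_elem R J a \<in> L)
    \<Longrightarrow> J \<in> L"
  unfolding gabriel_filter_def by blast

lemma totally_artinian_wrtD:
  assumes "totally_artinian_wrt R L" and "\<And>n. ideal (I n) R" and "\<And>n. I (Suc n) \<subseteq> I n"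
  obtains m h where "h \<in> L" and "I m \<cdot>\<^bsub>R\<^esub> h \<subseteq> I (Suc m)"
  using assms unfolding totally_artinian_wrt_def by (meson le_SucI order_refl)

lemma (in primeideal) nat_pow_notin:
  assumes "x \<in> carrier R" and "x \<notin> I"
  shows "x [^] (n::nat) \<notin> I"
proof (induction n)
  case 0
  then show ?case
    using one_imp_carrier I_notcarr by auto
next
  case (Suc n)
  then show ?case
    using assms I_prime[of "x [^] n" x] nat_pow_closed[OF assms(1)] by auto
qed

context cring
begin

lemma ideal_of_closed:
  assumes "I \<subseteq> carrier R" and "\<zero> \<in> I"
    and "\<And>a b. a \<in> I \<Longrightarrow> b \<in> I \<Longrightarrow> a \<oplus> b \<in> I"
    and "\<And>a. a \<in> I \<Longrightarrow> \<ominus> a \<in> I"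
    and "\<And>a x. a \<in> I \<Longrightarrow> x \<in> carrier R \<Longrightarrow> x \<otimes> a \<in> I"
  shows "ideal I R"
proof (rule idealI[OF ring_axioms])
  show "subgroup I (add_monoid R)"
    using assms(1-4) by (intro subgroup.intro) (auto simp: a_inv_def)
  show "a \<otimes> x \<in> I" if "a \<in> I" "x \<in> carrier R" for a x
    using assms(1,5) that by (metis m_comm subsetD)
qed (use assms(5) in blast)

lemma mem_colon_elem: "x \<in> colon_elem R J a \<longleftrightarrow> x \<in> carrier R \<and> x \<otimes> a \<in> J"
  by (simp add: colon_elem_def)

lemma colon_elem_ideal:
  assumes J: "ideal J R" and a: "a \<in> carrier R"
  shows "ideal (colon_elem R J a) R"
proof (rule ideal_of_closed)
  interpret J: ideal J R by fact
  show "colon_elem R J a \<subseteq> carrier R" "\<zero> \<in> colon_elem R J a"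
    using a by (auto simp: mem_colon_elem)
  show "x \<oplus> y \<in> colon_elem R J a" if "x \<in> colon_elem R J a" "y \<in> colon_elem R J a" for x y
    using that a by (auto simp: mem_colon_elem l_distr J.a_closed)
  show "\<ominus> x \<in> colon_elem R J a" if "x \<in> colon_elem R J a" for x
    using that a by (auto simp: mem_colon_elem l_minus J.a_inv_closed)
  show "y \<otimes> x \<in> colon_elem R J a" if "x \<in> colon_elem R J a" "y \<in> carrier R" for x y
    using that a by (auto simp: mem_colon_elem m_assoc J.I_l_closed)
qed

lemma colon_elem_one: "ideal J R \<Longrightarrow> colon_elem R J \<one> = J"
  by (auto simp: mem_colon_elem ideal.Icarr)

lemma colon_elem_eq_carrier: "ideal J R \<Longrightarrow> x \<in> J \<Longrightarrow> colon_elem R J x = carrier R"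
  by (auto simp: mem_colon_elem ideal.I_l_closed)

lemma colon_elem_mult:
  "x \<in> carrier R \<Longrightarrow> y \<in> carrier R \<Longrightarrow> colon_elem R J (x \<otimes> y) = colon_elem R (colon_elem R J y) x"
  by (auto simp: mem_colon_elem m_assoc)

lemma colon_elem_subset_mult:
  "ideal J R \<Longrightarrow> x \<in> carrier R \<Longrightarrow> u \<in> carrier R \<Longrightarrow> colon_elem R J x \<subseteq> colon_elem R J (u \<otimes> x)"
  by (auto simp: mem_colon_elem) (metis ideal.I_l_closed m_lcomm)

lemma colon_elem_Int_subset_add:
  "ideal J R \<Longrightarrow> x \<in> carrier R \<Longrightarrow> y \<in> carrier R
    \<Longrightarrow> colon_elem R J x \<inter> colon_elem R J y \<subseteq> colon_elem R J (x \<oplus> y)"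
  by (auto simp: mem_colon_elem r_distr ideal.axioms(1) additive_subgroup.a_closed)

lemma colon_elem_subset_a_inv:
  "ideal J R \<Longrightarrow> x \<in> carrier R \<Longrightarrow> colon_elem R J x \<subseteq> colon_elem R J (\<ominus> x)"
  by (auto simp: mem_colon_elem r_minus ideal.axioms(1) additive_subgroup.a_inv_closed)

lemma mem_set_add_cgenideal:
  "w \<in> set_add R C (PIdl y) \<longleftrightarrow> (\<exists>c\<in>C. \<exists>r\<in>carrier R. w = c \<oplus> r \<otimes> y)"
  unfolding set_add_def' cgenideal_def by blast

lemma saturation_ideal:
  assumes L: "gabriel_filter R L" and J: "ideal J R"
  shows "ideal (saturation R L J) R"
proof (rule ideal_of_closed)
  have mono: "colon_elem R J y \<in> L" if "I \<in> L" "I \<subseteq> colon_elem R J y" "y \<in> carrier R" for I y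
    using gabriel_filter_mono[OF L that(1) colon_elem_ideal[OF J that(3)] that(2)] .
  show "saturation R L J \<subseteq> carrier R"
    by (auto simp: saturation_def)
  show "\<zero> \<in> saturation R L J"
    using colon_elem_eq_carrier[OF J additive_subgroup.zero_closed[OF ideal.axioms(1)[OF J]]]
      gabriel_filter_carrier[OF L]
    by (simp add: saturation_def)
  show "x \<oplus> y \<in> saturation R L J" if "x \<in> saturation R L J" "y \<in> saturation R L J" for x y
    using that gabriel_filter_Int[OF L] mono[OF _ colon_elem_Int_subset_add[OF J]]
    by (simp add: saturation_def)
  show "\<ominus> x \<in> saturation R L J" if "x \<in> saturation R L J" for x
    using that mono[OF _ colon_elem_subset_a_inv[OF J]] by (simp add: saturation_def)
  show "u \<otimes> x \<in> saturation R L J" if "x \<in> saturation R L J" "u \<in> carrier R" for x u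
    using that mono[OF _ colon_elem_subset_mult[OF J]] by (simp add: saturation_def)
qed

lemma subset_saturation:
  assumes L: "gabriel_filter R L" and J: "ideal J R"
  shows "J \<subseteq> saturation R L J"
  using colon_elem_eq_carrier[OF J] gabriel_filter_carrier[OF L] ideal.Icarr[OF J]
  by (auto simp: saturation_def)

lemma one_notin_saturation: "ideal J R \<Longrightarrow> J \<notin> L \<Longrightarrow> \<one> \<notin> saturation R L J"
  by (simp add: saturation_def colon_elem_one)

lemma saturation_saturated:
  assumes L: "gabriel_filter R L" and J: "ideal J R" and x: "x \<in> carrier R"
    and "colon_elem R (saturation R L J) x \<in> L"
  shows "x \<in> saturation R L J"
proof -
  have "colon_elem R J x \<in> L"
  proof (rule gabriel_filter_colon_closed[OF L colon_elem_ideal[OF J x] assms(4)])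
    fix a assume "a \<in> colon_elem R (saturation R L J) x"
    then have "a \<in> carrier R" "colon_elem R J (a \<otimes> x) \<in> L"
      by (auto simp: mem_colon_elem saturation_def)
    then show "colon_elem R (colon_elem R J x) a \<in> L"
      using colon_elem_mult[OF _ x] by simp
  qed
  then show ?thesis
    using x by (simp add: saturation_def)
qed

lemma totally_artinian_cgenideal_chain:
  assumes A: "totally_artinian_wrt R L" and C: "ideal C R"
    and f: "\<And>n. f n \<in> carrier R" and step: "\<And>n. \<exists>u\<in>carrier R. f (Suc n) = u \<otimes> f n"
  obtains m h where "h \<in> L"
    and "\<And>z. z \<in> h \<Longrightarrow> \<exists>c\<in>C. \<exists>r\<in>carrier R. f m \<otimes> z = c \<oplus> r \<otimes> f (Suc m)"
proof -
  define I where "I n = set_add R C (PIdl (f n))" for n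
  have "ideal (I n) R" for n
    unfolding I_def using add_ideals[OF C cgenideal_ideal[OF f]] .
  moreover have "I (Suc n) \<subseteq> I n" for n
  proof
    fix w assume "w \<in> I (Suc n)"
    then obtain c r where c: "c \<in> C" and r: "r \<in> carrier R" and w: "w = c \<oplus> r \<otimes> f (Suc n)"
      by (auto simp: I_def mem_set_add_cgenideal)
    obtain u where u: "u \<in> carrier R" and "f (Suc n) = u \<otimes> f n"
      using step by blast
    with w r f have "w = c \<oplus> (r \<otimes> u) \<otimes> f n"
      by (simp add: m_assoc)
    with c r u show "w \<in> I n"
      unfolding I_def mem_set_add_cgenideal by blast
  qed
  ultimately obtain m h where h: "h \<in> L" and mh: "I m \<cdot> h \<subseteq> I (Suc m)"
    using totally_artinian_wrtD[OF A] by blast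
  have "f m = \<zero> \<oplus> \<one> \<otimes> f m"
    using f by simp
  then have "f m \<in> I m"
    unfolding I_def mem_set_add_cgenideal
    using additive_subgroup.zero_closed[OF ideal.axioms(1)[OF C]] by blast
  then have "f m \<otimes> z \<in> I (Suc m)" if "z \<in> h" for z
    using ideal_prod.prod[OF _ that] mh by blast
  with h show ?thesis
    using that unfolding I_def mem_set_add_cgenideal by blast
qed

lemma not_primeideal_colon_elem:
  assumes C: "ideal C R" and y: "y \<in> carrier R" "y \<notin> C"
    and "\<not> primeideal (colon_elem R C y) R"
  shows "\<exists>u\<in>carrier R. \<exists>b\<in>carrier R. u \<otimes> y \<notin> C \<and> b \<otimes> y \<notin> C \<and> u \<otimes> b \<otimes> y \<in> C"
proof -
  have "\<one> \<notin> colon_elem R C y"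
    using y by (simp add: mem_colon_elem)
  then have "carrier R \<noteq> colon_elem R C y"
    using one_closed by blast
  with assms(4) obtain u b where "u \<in> carrier R" "b \<in> carrier R" "u \<otimes> b \<in> colon_elem R C y"
    and "u \<notin> colon_elem R C y" "b \<notin> colon_elem R C y"
    using primeidealI[OF colon_elem_ideal[OF C y(1)] is_cring] by blast
  then show ?thesis
    unfolding mem_colon_elem by blast
qed

lemma subset_colon_elem_of_cgenideal_step:
  assumes C: "ideal C R" and h: "h \<subseteq> carrier R"
    and y: "y \<in> carrier R" and u: "u \<in> carrier R" and b: "b \<in> carrier R" and ub: "u \<otimes> b \<otimes> y \<in> C"
    and step: "\<And>z. z \<in> h \<Longrightarrow> \<exists>c\<in>C. \<exists>r\<in>carrier R. y \<otimes> z = c \<oplus> r \<otimes> (u \<otimes> y)"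
  shows "h \<subseteq> colon_elem R C (b \<otimes> y)"
proof
  fix z assume z: "z \<in> h"
  then have zc: "z \<in> carrier R"
    using h by blast
  obtain c r where c: "c \<in> C" and r: "r \<in> carrier R" and eq: "y \<otimes> z = c \<oplus> r \<otimes> (u \<otimes> y)"
    using step[OF z] by blast
  have "z \<otimes> (b \<otimes> y) = b \<otimes> (y \<otimes> z)"
    using zc b y by (simp add: m_ac)
  also have "\<dots> = b \<otimes> c \<oplus> r \<otimes> (u \<otimes> b \<otimes> y)"
    using eq b r u y ideal.Icarr[OF C c] by (simp add: r_distr m_ac)
  finally have "z \<otimes> (b \<otimes> y) \<in> C"
    using C c b r ub by (simp add: ideal.I_l_closed ideal.axioms(1) additive_subgroup.a_closed)
  with zc show "z \<in> colon_elem R C (b \<otimes> y)"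
    by (simp add: mem_colon_elem)
qed

text \<open>If no colon ideal \<open>(C : y)\<close> were prime, choosing \<open>u b\<close> with \<open>u b y \<in> C\<close>, \<open>u y, b y \<notin> C\<close> and
  passing to \<open>u y\<close> repeatedly gives a chain \<open>C + (y\<^sub>n)\<close>; stabilisation up to \<open>h \<in> L\<close> yields
  \<open>h \<subseteq> (C : b y\<^sub>m)\<close>, so \<open>b y\<^sub>m \<in> C\<close> by saturation.\<close>
lemma saturated_ideal_has_prime_colon:
  assumes L: "gabriel_filter R L" and A: "totally_artinian_wrt R L"
    and C: "ideal C R" and one: "\<one> \<notin> C"
    and saturated: "\<And>x. x \<in> carrier R \<Longrightarrow> colon_elem R C x \<in> L \<Longrightarrow> x \<in> C"
  shows "\<exists>y\<in>carrier R. y \<notin> C \<and> primeideal (colon_elem R C y) R"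
proof (rule ccontr)
  assume no_prime: "\<not> ?thesis"
  obtain y where y: "\<And>n. y n \<in> carrier R \<and> y n \<notin> C"
    and step: "\<And>n. \<exists>u\<in>carrier R. \<exists>b\<in>carrier R.
                 y (Suc n) = u \<otimes> y n \<and> b \<otimes> y n \<notin> C \<and> u \<otimes> b \<otimes> y n \<in> C"
  proof -
    have "\<exists>y. \<forall>n. (y n \<in> carrier R \<and> y n \<notin> C) \<and> (\<exists>u\<in>carrier R. \<exists>b\<in>carrier R.
            y (Suc n) = u \<otimes> y n \<and> b \<otimes> y n \<notin> C \<and> u \<otimes> b \<otimes> y n \<in> C)"
    proof (rule dependent_nat_choice)
      show "\<exists>x. x \<in> carrier R \<and> x \<notin> C"
        using one one_closed by blast
      show "\<exists>x'. (x' \<in> carrier R \<and> x' \<notin> C) \<and> (\<exists>u\<in>carrier R. \<exists>b\<in>carrier R.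
              x' = u \<otimes> x \<and> b \<otimes> x \<notin> C \<and> u \<otimes> b \<otimes> x \<in> C)"
        if "x \<in> carrier R \<and> x \<notin> C" for x n
        using not_primeideal_colon_elem[OF C, of x] no_prime that by blast
    qed
    then show ?thesis
      using that by blast
  qed
  obtain m h where h: "h \<in> L"
    and hm: "\<And>z. z \<in> h \<Longrightarrow> \<exists>c\<in>C. \<exists>r\<in>carrier R. y m \<otimes> z = c \<oplus> r \<otimes> y (Suc m)"
  proof (rule totally_artinian_cgenideal_chain[OF A C, of y])
    show "y n \<in> carrier R" for n
      using y by blast
    show "\<exists>u\<in>carrier R. y (Suc n) = u \<otimes> y n" for n
      using step by blast
  qed (use that in blast)
  obtain u b where u: "u \<in> carrier R" and b: "b \<in> carrier R" and ym: "y (Suc m) = u \<otimes> y m"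
    and b_notin: "b \<otimes> y m \<notin> C" and ub: "u \<otimes> b \<otimes> y m \<in> C"
    using step by blast
  have ymc: "y m \<in> carrier R"
    using y by blast
  have "h \<subseteq> carrier R"
    using ideal.Icarr[OF gabriel_filter_ideal[OF L h]] by blast
  then have "h \<subseteq> colon_elem R C (b \<otimes> y m)"
    using subset_colon_elem_of_cgenideal_step[OF C _ ymc u b ub] hm ym by simp
  then have "colon_elem R C (b \<otimes> y m) \<in> L"
    using gabriel_filter_mono[OF L h colon_elem_ideal[OF C]] b ymc by simp
  then show False
    using saturated b ymc b_notin by simp
qed

lemma exists_primeideal_outside_filter:
  assumes L: "gabriel_filter R L" and A: "totally_artinian_wrt R L"
    and J: "ideal J R" and J_notin: "J \<notin> L"
  obtains P where "primeideal P R" and "P \<notin> L" and "J \<subseteq> P"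
proof -
  let ?C = "saturation R L J"
  obtain y where y: "y \<in> carrier R" "y \<notin> ?C" and P: "primeideal (colon_elem R ?C y) R"
    using saturated_ideal_has_prime_colon[OF L A saturation_ideal[OF L J]
        one_notin_saturation[OF J J_notin] saturation_saturated[OF L J]] by blast
  have "colon_elem R ?C y \<notin> L"
    using saturation_saturated[OF L J y(1)] y(2) by blast
  moreover have "J \<subseteq> colon_elem R ?C y"
  proof
    fix x assume "x \<in> J"
    then have "x \<otimes> y \<in> J" "x \<in> carrier R"
      using J y(1) by (simp_all add: ideal.I_r_closed ideal.Icarr)
    then show "x \<in> colon_elem R ?C y"
      using subset_saturation[OF L J] by (auto simp: mem_colon_elem)
  qed
  ultimately show ?thesis
    using that P by blast
qed

lemma primeideal_diff_mem_of_nat_pow_mult: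
  assumes P: "primeideal P R" and x: "x \<in> carrier R" "x \<notin> P"
    and z: "z \<in> carrier R" and r: "r \<in> carrier R"
    and c: "c \<in> P" and eq: "x [^] (m::nat) \<otimes> z = c \<oplus> r \<otimes> (x [^] m \<otimes> x)"
  shows "z \<ominus> r \<otimes> x \<in> P"
proof -
  have "x [^] m \<otimes> (z \<ominus> r \<otimes> x) = c"
    using eq x z r ideal.Icarr[OF primeideal.axioms(1)[OF P] c] nat_pow_closed[OF x(1), of m]
    by algebra
  moreover have "z \<ominus> r \<otimes> x \<in> carrier R"
    using z r x by simp
  ultimately show ?thesis
    using primeideal.I_prime[OF P nat_pow_closed[OF x(1)]] primeideal.nat_pow_notin[OF P x] c
    by blast
qed

text \<open>Prime ideals outside \<open>L\<close> are pairwise incomparable: an element \<open>x \<in> Q - P\<close> gives the chain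
  \<open>P + (x\<^sup>n)\<close>, and the artinian condition forces some \<open>h \<in> L\<close> into \<open>P + (x) \<subseteq> Q\<close>.\<close>
lemma primeideal_eq_of_subset:
  assumes L: "gabriel_filter R L" and A: "totally_artinian_wrt R L"
    and P: "primeideal P R" and Q: "primeideal Q R" and PQ: "P \<subseteq> Q" and Q_notin: "Q \<notin> L"
  shows "P = Q"
proof (rule ccontr)
  assume "P \<noteq> Q"
  with PQ obtain x where xQ: "x \<in> Q" and xP: "x \<notin> P"
    by blast
  have P_ideal: "ideal P R" and Q_ideal: "ideal Q R"
    using P Q by (simp_all add: primeideal.axioms(1))
  have x: "x \<in> carrier R"
    using ideal.Icarr[OF Q_ideal xQ] .
  obtain m h where h: "h \<in> L"
    and hm: "\<And>z. z \<in> h \<Longrightarrow> \<exists>c\<in>P. \<exists>r\<in>carrier R. x [^] m \<otimes> z = c \<oplus> r \<otimes> x [^] Suc m"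
  proof (rule totally_artinian_cgenideal_chain[OF A P_ideal, of "\<lambda>n. x [^] n"])
    show "x [^] n \<in> carrier R" for n :: nat
      using x by simp
    show "\<exists>u\<in>carrier R. x [^] Suc n = u \<otimes> x [^] n" for n
      using x by (auto simp: m_comm)
  qed (use that in blast)
  have "h \<subseteq> Q"
  proof
    fix z assume z: "z \<in> h"
    have zc: "z \<in> carrier R"
      using ideal.Icarr[OF gabriel_filter_ideal[OF L h] z] .
    obtain c r where "c \<in> P" and r: "r \<in> carrier R"
      and "x [^] m \<otimes> z = c \<oplus> r \<otimes> (x [^] m \<otimes> x)"
      using hm[OF z] by auto
    then have "z \<ominus> r \<otimes> x \<in> P"
      using primeideal_diff_mem_of_nat_pow_mult[OF P x xP zc r] by blast
    moreover have "r \<otimes> x \<in> Q"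
      using ideal.I_l_closed[OF Q_ideal xQ r] .
    ultimately have "(z \<ominus> r \<otimes> x) \<oplus> r \<otimes> x \<in> Q"
      using PQ Q_ideal by (auto intro: additive_subgroup.a_closed ideal.axioms(1))
    moreover have "(z \<ominus> r \<otimes> x) \<oplus> r \<otimes> x = z"
      using zc r x by algebra
    ultimately show "z \<in> Q"
      by simp
  qed
  then have "Q \<in> L"
    using gabriel_filter_mono[OF L h Q_ideal] by blast
  with Q_notin show False
    by blast
qed


lemma ideal_carrier_Int_INT:
  "(\<And>i. i < n \<Longrightarrow> ideal (Q i) R) \<Longrightarrow> ideal (carrier R \<inter> (\<Inter>i<n. Q i)) R"
  using i_Intersect[of "insert (carrier R) (Q ` {..<n})"] oneideal by auto

lemma primeideal_contains_INT:
  fixes n :: nat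
  assumes P: "primeideal P R" and Q: "\<And>i. i < n \<Longrightarrow> ideal (Q i) R"
    and sub: "carrier R \<inter> (\<Inter>i<n. Q i) \<subseteq> P"
  shows "\<exists>i<n. Q i \<subseteq> P"
  using Q sub
proof (induction n)
  case 0
  then show ?case
    using primeideal.I_notcarr[OF P] ideal.Icarr[OF primeideal.axioms(1)[OF P]] by auto
next
  case (Suc n)
  let ?I = "carrier R \<inter> (\<Inter>i<n. Q i)"
  have I: "ideal ?I R" and Qn: "ideal (Q n) R"
    using ideal_carrier_Int_INT[of n Q] Suc.prems(1) by simp_all
  have "?I \<inter> Q n \<subseteq> P"
    using Suc.prems(2) by (auto simp: lessThan_Suc)
  then have "?I \<cdot> Q n \<subseteq> P"
    using ideal_prod_inter[OF I Qn] by blast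
  then have "?I \<subseteq> P \<or> Q n \<subseteq> P"
    using primeideal_divides_ideal_prod[OF P I Qn] by blast
  then show ?case
    using Suc by (metis less_Suc_eq)
qed

text \<open>An infinite sequence of distinct such primes \<open>Q n\<close> would give the descending chain
  \<open>\<Inter>i<n. Q i\<close>, whose stabilisation up to some \<open>h \<in> L\<close> puts \<open>h\<close> or an earlier \<open>Q i\<close> into \<open>Q m\<close>.\<close>
lemma finite_primeideals_outside_filter:
  assumes L: "gabriel_filter R L" and A: "totally_artinian_wrt R L"
  shows "finite {P. primeideal P R \<and> P \<notin> L}"
proof (rule ccontr)
  assume "infinite {P. primeideal P R \<and> P \<notin> L}"
  then obtain Q :: "nat \<Rightarrow> 'a set" where inj: "inj Q"
    and Q: "\<And>n. primeideal (Q n) R" and Q_notin: "\<And>n. Q n \<notin> L"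
    unfolding infinite_iff_countable_subset by blast
  have Q_ideal: "\<And>n. ideal (Q n) R"
    using Q primeideal.axioms(1) by blast
  define I where "I n = carrier R \<inter> (\<Inter>i<n. Q i)" for n
  have I_ideal: "ideal (I n) R" for n
    unfolding I_def using ideal_carrier_Int_INT Q_ideal by blast
  have I_Suc: "I (Suc n) = I n \<inter> Q n" for n
    by (auto simp: I_def lessThan_Suc)
  have "I (Suc n) \<subseteq> I n" for n
    using I_Suc by blast
  then obtain m h where h: "h \<in> L" and mh: "I m \<cdot> h \<subseteq> I (Suc m)"
    by (rule totally_artinian_wrtD[OF A I_ideal])
  then have "I m \<cdot> h \<subseteq> Q m"
    unfolding I_Suc by blast
  then have "I m \<subseteq> Q m \<or> h \<subseteq> Q m"
    by (rule primeideal_divides_ideal_prod[OF Q I_ideal gabriel_filter_ideal[OF L h]])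
  moreover have "\<not> h \<subseteq> Q m"
    using gabriel_filter_mono[OF L h Q_ideal] Q_notin by blast
  ultimately have "carrier R \<inter> (\<Inter>i<m. Q i) \<subseteq> Q m"
    unfolding I_def by blast
  then have "\<exists>i<m. Q i \<subseteq> Q m"
    using primeideal_contains_INT[OF Q] Q_ideal by blast
  then obtain i where "i < m" "Q i \<subseteq> Q m"
    by blast
  then have "Q i = Q m"
    using primeideal_eq_of_subset[OF L A Q Q] Q_notin by blast
  with \<open>i < m\<close> inj show False
    by (metis inj_eq less_irrefl)
qed

lemma exists_finitely_generated_subideal:
  assumes L: "gabriel_filter R L" and A: "totally_artinian_wrt R L" and I: "I \<in> L"
  shows "\<exists>J\<in>L. J \<subseteq> I \<and> finitely_generated_ideal R J"
proof -
  let ?Ps = "{P. primeideal P R \<and> P \<notin> L}"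
  have "\<forall>P\<in>?Ps. \<exists>y. y \<in> I \<and> y \<notin> P"
    using gabriel_filter_mono[OF L I] primeideal.axioms(1) by blast
  then obtain x where x: "\<forall>P\<in>?Ps. x P \<in> I \<and> x P \<notin> P"
    by (rule bchoice[THEN exE])
  let ?S = "x ` ?Ps"
  have S: "finite ?S" "?S \<subseteq> carrier R"
    using finite_primeideals_outside_filter[OF L A] x
      ideal.Icarr[OF gabriel_filter_ideal[OF L I]] by auto
  have "Idl ?S \<subseteq> I"
    using genideal_minimal[OF gabriel_filter_ideal[OF L I]] x by blast
  moreover have "Idl ?S \<in> L"
  proof (rule ccontr)
    assume "Idl ?S \<notin> L"
    then obtain P where "P \<in> ?Ps" "Idl ?S \<subseteq> P"
      using exists_primeideal_outside_filter[OF L A genideal_ideal[OF S(2)]] by blast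
    then show False
      using x genideal_self[OF S(2)] by blast
  qed
  ultimately show ?thesis
    using S unfolding finitely_generated_ideal_def by blast
qed

end

theorem mainTheorem2:
  fixes R :: "('a, 'b) ring_scheme" and L :: "'a set set"
  assumes "cring R"
    and "gabriel_filter R L"
    and "totally_artinian_wrt R L"
  shows "finite_type_filter R L"
  using cring.exists_finitely_generated_subideal[OF assms]
  unfolding finite_type_filter_def by blast

end
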